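(* The Banach space $Y$ (the predual of $\mathcal{F}(\mathcal{M})$ described in the context) is not polyhedral, i.e. there is a finite-dimensional subspace of $Y$ whose unit ball is not a polytope.
   Context: For a pointed metric space $M$, ${\mathrm{Lip}}_0(M)$ is the space of real Lipschitz functions vanishing at the base point, normed by the Lipschitz constant $\|\cdot\|_L$. A function $f$ on a metric space is locally flat if $\lim_{x,y\to z}\frac{f(x)-f(y)}{d(x,y)}=0$ for every $z$. Let $p=(0,0)$, $q=(1,0)$, $S_n=\{(2^{-n}k,2^{-n}):k=0,\dots,2^n\}$ for $n\in\mathbb{N}$, and $\mathcal{M}=\{p,q\}\cup\bigcup_n S_n$ with the metric $d((x_1,y_1),(x_2,y_2))=|x_1-x_2|$ if $y_1=y_2$ and $=|y_1-y_2|+\min\{x_1+x_2,2-(x_1+x_2)\}$ if $y_1\neq y_2$, base point $p$. Let $V=\{(x,y)\in\mathcal{M}:x\in\{0,1\}\}$, $h(x,y)=x$, and $Y=\{f\in{\mathrm{Lip}}_0(\mathcal{M}):\lim_n\|(f-f(q)h)|_{S_n}\|_L=0,\ f|_V\text{ locally flat}\}$ with the Lipschitz norm. *)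

theory Defs
  imports "HOL-Analysis.Analysis" "HOL-Library.Function_Algebras"
begin

instantiation "fun" :: (type, real_vector) real_vector
begin
definition scaleR_fun :: "real \<Rightarrow> ('a \<Rightarrow> 'b) \<Rightarrow> 'a \<Rightarrow> 'b"
  where "scaleR_fun r f = (\<lambda>x. r *\<^sub>R f x)"
instance
  by standard (auto simp: scaleR_fun_def fun_eq_iff scaleR_add_right scaleR_add_left)
end

type_synonym pt = "real \<times> real"

definition pP :: pt where "pP = (0, 0)"
definition pQ :: pt where "pQ = (1, 0)"

definition Sn :: "nat \<Rightarrow> pt set" where
  "Sn n = {(real k / 2 ^ n, 1 / 2 ^ n) | k. k \<le> 2 ^ n}"

definition MM :: "pt set" where
  "MM = {pP, pQ} \<union> (\<Union>n\<in>{1..}. Sn n)"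

definition dM :: "pt \<Rightarrow> pt \<Rightarrow> real" where
  "dM a b = (if snd a = snd b then \<bar>fst a - fst b\<bar>
             else \<bar>snd a - snd b\<bar> + min (fst a + fst b) (2 - (fst a + fst b)))"

definition lipnorm :: "pt set \<Rightarrow> (pt \<Rightarrow> real) \<Rightarrow> real" where
  "lipnorm A f = Sup {\<bar>f x - f y\<bar> / dM x y | x y. x \<in> A \<and> y \<in> A \<and> x \<noteq> y}"

text \<open>Lip_0(M): Lipschitz functions on M vanishing at the base point p;
  represented canonically as functions that are 0 outside M.\<close>
definition Lip0 :: "(pt \<Rightarrow> real) set" where
  "Lip0 = {f. f pP = 0 \<and> (\<forall>x. x \<notin> MM \<longrightarrow> f x = 0) \<and>
              bdd_above {\<bar>f x - f y\<bar> / dM x y | x y. x \<in> MM \<and> y \<in> MM \<and> x \<noteq> y}}"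

definition VV :: "pt set" where
  "VV = {z \<in> MM. fst z = 0 \<or> fst z = 1}"

definition hh :: "pt \<Rightarrow> real" where "hh z = fst z"

definition locally_flat_on :: "pt set \<Rightarrow> (pt \<Rightarrow> real) \<Rightarrow> bool" where
  "locally_flat_on A f \<longleftrightarrow>
     (\<forall>z\<in>A. \<forall>e>0. \<exists>\<delta>>0. \<forall>x\<in>A. \<forall>y\<in>A.
        x \<noteq> y \<and> dM x z < \<delta> \<and> dM y z < \<delta> \<longrightarrow> \<bar>f x - f y\<bar> / dM x y \<le> e)"

definition YY :: "(pt \<Rightarrow> real) set" where
  "YY = {f \<in> Lip0. (\<lambda>n. lipnorm (Sn n) (\<lambda>z. f z - f pQ * hh z)) \<longlonglongrightarrow> 0
                 \<and> locally_flat_on VV f}"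

end

theory Submission
  imports Defs
begin

text \<open>Take F(x,y) = (1 - y^8) x and G(x,y) = y^4 x. Both lie in Y: on every level S_n they are
  linear in x, their level slopes converge to the slope at height 0, and because distinct heights
  y, y' of \<M> satisfy |y - y'| \<ge> max y y' / 2, the y^4-terms are flat at the corner q.
  On a single level the slope of F + t G is 1 + t y^4 - y^8 \<le> 1 + t^2/4, and across levels
  the distance |y - y'| dominates y^4 + y'^4; hence \<parallel>F + t G\<parallel> \<le> 1 + t^2/4 for 0 \<le> t \<le> 1.
  On the other hand \<parallel>F + s G\<parallel> > 1 for every s > 0, witnessed by the endpoints of a level
  of height y with y^4 < s. So in the plane span {F, G} the unit ball contains F and the curve
  (F + t G) / (1 + t^2/4), which is tangent at F to the ray F + s G (s > 0), but no point of that
  ray; a polygon cannot do this, since every half-plane containing it contains an initial piece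
  of the ray.\<close>

section \<open>The heights of \<M>\<close>

definition heights :: "real set" where
  "heights = insert 0 (range (\<lambda>n. 1 / 2 ^ Suc n))"

lemma MM_coordinates:
  assumes "z \<in> MM"
  shows "0 \<le> fst z \<and> fst z \<le> 1 \<and> snd z \<in> heights"
proof -
  consider "z = pP" | "z = pQ" | n where "n \<ge> 1" "z \<in> Sn n"
    using assms unfolding MM_def by auto
  then show ?thesis
  proof cases
    case 3
    then obtain k where k: "k \<le> (2::nat) ^ n" "z = (real k / 2 ^ n, 1 / 2 ^ n)"
      unfolding Sn_def by auto
    obtain n' where n': "n = Suc n'" using 3 by (cases n) auto
    have "real k \<le> 2 ^ n" using k(1)
      by (metis of_nat_le_iff of_nat_numeral of_nat_power)
    then show ?thesis using k unfolding heights_def n' by auto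
  qed (auto simp: pP_def pQ_def heights_def)
qed

lemma heights_bounds: "y \<in> heights \<Longrightarrow> 0 \<le> y \<and> y \<le> 1/2"
  unfolding heights_def by (auto simp: field_simps one_le_power)

lemma heights_lacunary:
  assumes "y \<in> heights" "y' \<in> heights" "y' < y"
  shows "y' \<le> y / 2"
proof (cases "y' = 0")
  case True
  then show ?thesis using heights_bounds[OF assms(1)] by simp
next
  case False
  then obtain m where m: "y' = 1 / 2 ^ Suc m" using assms(2) unfolding heights_def by auto
  have "y \<noteq> 0" using assms heights_bounds[OF assms(2)] by auto
  then obtain n where n: "y = 1 / 2 ^ Suc n" using assms(1) unfolding heights_def by auto
  have "(2::real) ^ Suc n < 2 ^ Suc m" using assms(3) unfolding m n by (simp add: field_simps)
  then have "n < m" by (simp add: power_strict_increasing_iff)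
  then have "(2::real) ^ Suc (Suc n) \<le> 2 ^ Suc m" by (intro power_increasing) auto
  then show ?thesis unfolding m n by (simp add: field_simps)
qed

lemma heights_gap:
  assumes "y \<in> heights" "y' \<in> heights" "y \<noteq> y'"
  shows "max y y' / 2 \<le> \<bar>y - y'\<bar>"
  using heights_lacunary[OF assms(1,2)] heights_lacunary[OF assms(2,1)] assms(3)
  by (cases "y' < y") auto

lemma heights_fourth_powers_le_gap:
  assumes "y \<in> heights" "y' \<in> heights" "y \<noteq> y'"
  shows "y^4 + y'^4 \<le> \<bar>y - y'\<bar> / 2"
proof -
  define M where "M = max y y'"
  have M: "0 \<le> M" "M \<le> 1/2"
    unfolding M_def using heights_bounds[OF assms(1)] heights_bounds[OF assms(2)] by auto
  have "M^3 \<le> (1/2)^3" using M by (intro power_mono) auto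
  then have "M * M^3 \<le> M * (1/8)" using M by (intro mult_left_mono) (auto simp: power_divide)
  then have M4: "M^4 \<le> M / 8" by (simp add: power_numeral_reduce)
  have "y^4 \<le> M^4" "y'^4 \<le> M^4"
    unfolding M_def using heights_bounds assms by (auto intro: power_mono)
  then have "y^4 + y'^4 \<le> M / 4" using M4 by linarith
  also have "\<dots> \<le> \<bar>y - y'\<bar> / 2" using heights_gap[OF assms, folded M_def] by simp
  finally show ?thesis .
qed

lemma heights_isolated:
  assumes "y \<in> heights" "y0 \<in> heights" "\<bar>y - y0\<bar> < y0 / 2"
  shows "y = y0"
  using heights_gap[OF assms(1,2)] assms(3) by (cases "y = y0") auto

lemma Sn_subset_MM: "n \<ge> 1 \<Longrightarrow> Sn n \<subseteq> MM"
  unfolding MM_def by auto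

lemma snd_Sn: "z \<in> Sn n \<Longrightarrow> snd z = 1 / 2 ^ n"
  unfolding Sn_def by auto

lemma endpoints_in_Sn: "(0, 1 / 2 ^ n) \<in> Sn n" "(1, 1 / 2 ^ n) \<in> Sn n"
  unfolding Sn_def by (auto intro!: exI[of _ 0] exI[of _ "2 ^ n"])

lemma points_in_MM: "pP \<in> MM" "pQ \<in> MM" "(0, 1 / 2 ^ Suc n) \<in> MM" "(1, 1 / 2 ^ Suc n) \<in> MM"
  using endpoints_in_Sn[of "Suc n"] Sn_subset_MM[of "Suc n"] unfolding MM_def by auto

lemma dM_same_level: "snd x = snd y \<Longrightarrow> dM x y = \<bar>fst x - fst y\<bar>"
  unfolding dM_def by simp

lemma dM_same_column:
  "fst x = fst y \<Longrightarrow> fst x \<in> {0, 1} \<Longrightarrow> dM x y = \<bar>snd x - snd y\<bar>"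
  unfolding dM_def by auto

lemma VV_columns: "z \<in> VV \<Longrightarrow> z \<in> MM \<and> fst z \<in> {0, 1}"
  unfolding VV_def by auto

lemma VV_near_same_column:
  assumes "x \<in> VV" "z \<in> VV" "dM x z < 1"
  shows "fst x = fst z"
  using VV_columns[OF assms(1)] VV_columns[OF assms(2)] assms(3) unfolding dM_def
  by (auto split: if_splits)

lemma lipnorm_MM_le:
  assumes "\<And>x y. x \<in> MM \<Longrightarrow> y \<in> MM \<Longrightarrow> x \<noteq> y \<Longrightarrow> \<bar>f x - f y\<bar> / dM x y \<le> L"
  shows "lipnorm MM f \<le> L"
  unfolding lipnorm_def
proof (rule cSup_least)
  show "{\<bar>f x - f y\<bar> / dM x y |x y. x \<in> MM \<and> y \<in> MM \<and> x \<noteq> y} \<noteq> {}"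
    using points_in_MM(1,2) by (fastforce simp: pP_def pQ_def)
qed (use assms in blast)

lemma slope_le_lipnorm_MM:
  assumes "f \<in> Lip0" "x \<in> MM" "y \<in> MM" "x \<noteq> y"
  shows "\<bar>f x - f y\<bar> / dM x y \<le> lipnorm MM f"
  unfolding lipnorm_def
proof (rule cSup_upper)
  show "bdd_above {\<bar>f x - f y\<bar> / dM x y |x y. x \<in> MM \<and> y \<in> MM \<and> x \<noteq> y}"
    using assms(1) unfolding Lip0_def by auto
qed (use assms(2-4) in blast)

lemma lipnorm_MM_scaleR_le:
  assumes "f \<in> Lip0" "0 \<le> c"
  shows "lipnorm MM (c *\<^sub>R f) \<le> c * lipnorm MM f"
proof (rule lipnorm_MM_le)
  fix x y assume xy: "x \<in> MM" "y \<in> MM" "x \<noteq> y"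
  have "\<bar>(c *\<^sub>R f) x - (c *\<^sub>R f) y\<bar> / dM x y = c * (\<bar>f x - f y\<bar> / dM x y)"
    using assms(2) by (simp add: scaleR_fun_def abs_mult flip: right_diff_distrib)
  also have "\<dots> \<le> c * lipnorm MM f"
    using slope_le_lipnorm_MM[OF assms(1) xy] assms(2) by (rule mult_left_mono)
  finally show "\<bar>(c *\<^sub>R f) x - (c *\<^sub>R f) y\<bar> / dM x y \<le> c * lipnorm MM f" .
qed

section \<open>Functions that are linear on every level\<close>

definition row_linear :: "(real \<Rightarrow> real) \<Rightarrow> pt \<Rightarrow> real" where
  "row_linear \<phi> z = (if z \<in> MM then \<phi> (snd z) * fst z else 0)"

lemma row_linear_lincomb:
  "a *\<^sub>R row_linear \<phi> + b *\<^sub>R row_linear \<psi> = row_linear (\<lambda>y. a * \<phi> y + b * \<psi> y)"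
  by (simp add: fun_eq_iff scaleR_fun_def row_linear_def algebra_simps)

lemma row_linear_slope_same_level:
  assumes "x \<in> MM" "y \<in> MM" "x \<noteq> y" "snd x = snd y"
  shows "\<bar>row_linear \<phi> x - row_linear \<phi> y\<bar> / dM x y = \<bar>\<phi> (snd x)\<bar>"
proof -
  have "fst x \<noteq> fst y" using assms(3,4) by (metis prod_eqI)
  moreover have "row_linear \<phi> x - row_linear \<phi> y = \<phi> (snd x) * (fst x - fst y)"
    using assms by (simp add: row_linear_def algebra_simps)
  ultimately show ?thesis using assms(4) by (simp add: dM_same_level abs_mult)
qed

lemma row_linear_slope_different_levels:
  assumes "x \<in> MM" "y \<in> MM" "snd x \<noteq> snd y" "0 \<le> E"
    and \<phi>: "\<And>v. v \<in> heights \<Longrightarrow> \<bar>\<phi> v - c\<bar> \<le> E * v^4"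
  shows "\<bar>row_linear \<phi> x - row_linear \<phi> y\<bar> / dM x y \<le> max \<bar>c\<bar> (E / 2)"
proof -
  obtain x1 x2 y1 y2 where xy: "x = (x1, x2)" "y = (y1, y2)" by fastforce
  have b: "0 \<le> x1" "x1 \<le> 1" "0 \<le> y1" "y1 \<le> 1" "x2 \<in> heights" "y2 \<in> heights"
    using MM_coordinates[OF assms(1)] MM_coordinates[OF assms(2)] xy by auto
  define m where "m = min (x1 + y1) (2 - (x1 + y1))"
  define d where "d = \<bar>x2 - y2\<bar>"
  have m: "0 \<le> m" "\<bar>x1 - y1\<bar> \<le> m" and d: "0 < d"
    using b assms(3) xy unfolding m_def d_def by auto
  have dM: "dM x y = d + m" using assms(3) unfolding xy dM_def m_def d_def by simp
  have ex: "\<bar>\<phi> x2 - c\<bar> * x1 \<le> E * x2^4" "\<bar>\<phi> y2 - c\<bar> * y1 \<le> E * y2^4"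
    using \<phi>[OF b(5)] \<phi>[OF b(6)] mult_left_mono[OF b(2), of "\<bar>\<phi> x2 - c\<bar>"]
      mult_left_mono[OF b(4), of "\<bar>\<phi> y2 - c\<bar>"] by simp_all
  have "\<bar>\<phi> x2 * x1 - \<phi> y2 * y1\<bar> = \<bar>c * (x1 - y1) + (\<phi> x2 - c) * x1 - (\<phi> y2 - c) * y1\<bar>"
    by (simp add: algebra_simps)
  also have "\<dots> \<le> \<bar>c\<bar> * \<bar>x1 - y1\<bar> + \<bar>\<phi> x2 - c\<bar> * x1 + \<bar>\<phi> y2 - c\<bar> * y1"
    using b abs_triangle_ineq[of "c * (x1 - y1)" "(\<phi> x2 - c) * x1"]
      abs_triangle_ineq4[of "c * (x1 - y1) + (\<phi> x2 - c) * x1" "(\<phi> y2 - c) * y1"]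
    by (simp add: abs_mult)
  also have "\<dots> \<le> \<bar>c\<bar> * m + E * (x2^4 + y2^4)"
    using ex m(2) mult_left_mono[OF m(2), of "\<bar>c\<bar>"] by (simp add: algebra_simps)
  also have "\<dots> \<le> \<bar>c\<bar> * m + (E / 2) * d"
    using mult_left_mono[OF heights_fourth_powers_le_gap[OF b(5,6)] assms(4)] assms(3) xy
    unfolding d_def by simp
  also have "\<dots> \<le> max \<bar>c\<bar> (E / 2) * m + max \<bar>c\<bar> (E / 2) * d"
    using m d by (intro add_mono mult_right_mono) auto
  also have "\<dots> = max \<bar>c\<bar> (E / 2) * (d + m)" by (simp add: algebra_simps)
  finally have "\<bar>\<phi> x2 * x1 - \<phi> y2 * y1\<bar> \<le> max \<bar>c\<bar> (E / 2) * dM x y" unfolding dM .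
  moreover have "row_linear \<phi> x - row_linear \<phi> y = \<phi> x2 * x1 - \<phi> y2 * y1"
    using assms(1,2) xy by (simp add: row_linear_def)
  ultimately show ?thesis using d m unfolding dM by (simp add: divide_le_eq)
qed

lemma row_linear_slope_bounded:
  assumes "x \<in> MM" "y \<in> MM" "x \<noteq> y" "0 \<le> E"
    and \<phi>: "\<And>v. v \<in> heights \<Longrightarrow> \<bar>\<phi> v - c\<bar> \<le> E * v^4"
  shows "\<bar>row_linear \<phi> x - row_linear \<phi> y\<bar> / dM x y \<le> \<bar>c\<bar> + E"
proof (cases "snd x = snd y")
  case True
  have h: "snd x \<in> heights" "0 \<le> snd x" "snd x \<le> 1"
    using MM_coordinates[OF assms(1)] heights_bounds[of "snd x"] by auto
  have "E * snd x ^ 4 \<le> E" using h assms(4) by (simp add: mult_left_le power_le_one)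
  then have "\<bar>\<phi> (snd x)\<bar> \<le> \<bar>c\<bar> + E" using \<phi>[OF h(1)] by linarith
  then show ?thesis using row_linear_slope_same_level[OF assms(1-3) True] by simp
next
  case False
  then show ?thesis
    using row_linear_slope_different_levels[OF assms(1,2) False assms(4) \<phi>] assms(4) by simp
qed

lemma row_linear_Lip0:
  assumes "0 \<le> E" "\<And>v. v \<in> heights \<Longrightarrow> \<bar>\<phi> v - c\<bar> \<le> E * v^4"
  shows "row_linear \<phi> \<in> Lip0"
  unfolding Lip0_def
proof (intro CollectI conjI allI impI)
  show "row_linear \<phi> pP = 0" by (simp add: row_linear_def pP_def)
  show "row_linear \<phi> x = 0" if "x \<notin> MM" for x using that by (simp add: row_linear_def)
  show "bdd_above {\<bar>row_linear \<phi> x - row_linear \<phi> y\<bar> / dM x y |x y. x \<in> MM \<and> y \<in> MM \<and> x \<noteq> y}"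
    using row_linear_slope_bounded[OF _ _ _ assms] by (intro bdd_aboveI[where M = "\<bar>c\<bar> + E"]) blast
qed

lemma row_linear_pQ: "row_linear \<phi> pQ = \<phi> 0"
  using points_in_MM(2) by (simp add: row_linear_def pQ_def)

lemma lipnorm_Sn_row_linear:
  assumes "n \<ge> 1"
  shows "lipnorm (Sn n) (\<lambda>z. row_linear \<phi> z - row_linear \<phi> pQ * hh z) = \<bar>\<phi> (1 / 2 ^ n) - \<phi> 0\<bar>"
proof -
  let ?g = "\<lambda>z. row_linear \<phi> z - row_linear \<phi> pQ * hh z"
  let ?c = "\<phi> (1 / 2 ^ n) - \<phi> 0"
  have g: "?g z = ?c * fst z" if "z \<in> Sn n" for z
    unfolding row_linear_pQ using that Sn_subset_MM[OF assms]
    by (auto simp: row_linear_def hh_def snd_Sn left_diff_distrib)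
  have slope: "\<bar>?g x - ?g y\<bar> / dM x y = \<bar>?c\<bar>" if "x \<in> Sn n" "y \<in> Sn n" "x \<noteq> y" for x y
  proof -
    have "snd x = snd y" using that snd_Sn by simp
    moreover from this have "fst x \<noteq> fst y" using that(3) by (metis prod_eqI)
    ultimately show ?thesis
      using that by (simp add: g dM_same_level abs_mult flip: right_diff_distrib)
  qed
  have "(1::real, 1 / 2 ^ n) \<noteq> (0, 1 / 2 ^ n)" by simp
  then have "\<exists>x y. \<bar>?c\<bar> = \<bar>?g x - ?g y\<bar> / dM x y \<and> x \<in> Sn n \<and> y \<in> Sn n \<and> x \<noteq> y"
    using slope endpoints_in_Sn[of n] by metis
  then have "{\<bar>?g x - ?g y\<bar> / dM x y | x y. x \<in> Sn n \<and> y \<in> Sn n \<and> x \<noteq> y} = {\<bar>?c\<bar>}"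
    using slope by blast
  then show ?thesis unfolding lipnorm_def by simp
qed

lemma row_linear_level_slopes_tendsto:
  assumes "isCont \<phi> 0"
  shows "(\<lambda>n. lipnorm (Sn n) (\<lambda>z. row_linear \<phi> z - row_linear \<phi> pQ * hh z)) \<longlonglongrightarrow> 0"
proof -
  have "(\<lambda>n. 1 / 2 ^ n :: real) \<longlonglongrightarrow> 0"
    using LIMSEQ_realpow_zero[of "1/2"] by (simp add: power_divide)
  then have "(\<lambda>n. \<phi> (1 / 2 ^ n)) \<longlonglongrightarrow> \<phi> 0" by (rule isCont_tendsto_compose[OF assms])
  then have "(\<lambda>n. \<bar>\<phi> (1 / 2 ^ n) - \<phi> 0\<bar>) \<longlonglongrightarrow> 0"
    by (simp add: LIM_zero_iff tendsto_rabs_zero)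
  moreover have "\<forall>\<^sub>F n in sequentially. \<bar>\<phi> (1 / 2 ^ n) - \<phi> 0\<bar> =
      lipnorm (Sn n) (\<lambda>z. row_linear \<phi> z - row_linear \<phi> pQ * hh z)"
    by (intro eventually_sequentiallyI[of 1]) (simp add: lipnorm_Sn_row_linear)
  ultimately show ?thesis by (rule Lim_transform_eventually)
qed

lemma row_linear_slope_right_column:
  assumes "x \<in> MM" "y \<in> MM" "fst x = 1" "fst y = 1" "snd x \<noteq> snd y" "0 \<le> E"
    and \<phi>: "\<And>v. v \<in> heights \<Longrightarrow> \<bar>\<phi> v - c\<bar> \<le> E * v^4"
  shows "\<bar>row_linear \<phi> x - row_linear \<phi> y\<bar> / dM x y \<le> 4 * E * max (snd x) (snd y)"
proof -
  define M where "M = max (snd x) (snd y)"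
  have h: "snd x \<in> heights" "snd y \<in> heights" using MM_coordinates assms(1,2) by auto
  have M: "0 \<le> M" "M \<le> 1"
    unfolding M_def using heights_bounds[OF h(1)] heights_bounds[OF h(2)] by auto
  have p4: "snd x ^ 4 \<le> M^4" "snd y ^ 4 \<le> M^4"
    unfolding M_def using heights_bounds[OF h(1)] heights_bounds[OF h(2)] by (auto intro: power_mono)
  have "\<bar>\<phi> (snd x) - \<phi> (snd y)\<bar> \<le> E * snd x ^ 4 + E * snd y ^ 4"
    using \<phi>[OF h(1)] \<phi>[OF h(2)] by linarith
  also have "\<dots> \<le> 2 * E * M^4"
    using mult_left_mono[OF p4(1) assms(6)] mult_left_mono[OF p4(2) assms(6)] by simp
  also have "\<dots> \<le> 2 * E * M^2"
    using mult_left_mono[OF power_decreasing[of 2 4 M], of "2 * E"] M assms(6) by simp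
  also have "\<dots> = (4 * E * M) * (M / 2)" by (simp add: power2_eq_square)
  also have "\<dots> \<le> (4 * E * M) * \<bar>snd x - snd y\<bar>"
    using heights_gap[OF h assms(5), folded M_def] M assms(6) by (intro mult_left_mono) auto
  finally have "\<bar>\<phi> (snd x) - \<phi> (snd y)\<bar> \<le> 4 * E * M * dM x y"
    using dM_same_column[of x y] assms(3,4) by simp
  moreover have "row_linear \<phi> x - row_linear \<phi> y = \<phi> (snd x) - \<phi> (snd y)"
    using assms(1-4) by (simp add: row_linear_def)
  moreover have "0 < dM x y" using dM_same_column[of x y] assms(3-5) by simp
  ultimately show ?thesis unfolding M_def by (simp add: divide_le_eq)
qed

lemma row_linear_locally_flat:
  assumes "0 \<le> E" "\<And>v. v \<in> heights \<Longrightarrow> \<bar>\<phi> v - c\<bar> \<le> E * v^4"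
  shows "locally_flat_on VV (row_linear \<phi>)"
  unfolding locally_flat_on_def
proof (intro ballI allI impI)
  let ?f = "row_linear \<phi>"
  fix z :: pt and e :: real
  assume z: "z \<in> VV" and e: "0 < e"
  have zh: "snd z \<in> heights" using VV_columns[OF z] MM_coordinates by blast
  have hV: "snd x \<in> heights" "0 \<le> snd x" if "x \<in> VV" for x
    using VV_columns[OF that] MM_coordinates heights_bounds by blast+
  have near: "fst x = fst z \<and> dM x z = \<bar>snd x - snd z\<bar>" if "x \<in> VV" "dM x z < 1" for x
    using VV_near_same_column[OF that(1) z that(2)] VV_columns[OF z] dM_same_column by auto
  consider "fst z = 0" | "fst z = 1" "snd z > 0" | "fst z = 1" "snd z = 0"
    using VV_columns[OF z] hV[OF z] by fastforce
  then show "\<exists>\<delta>>0. \<forall>x\<in>VV. \<forall>y\<in>VV. x \<noteq> y \<and> dM x z < \<delta> \<and> dM y z < \<delta> \<longrightarrow> \<bar>?f x - ?f y\<bar> / dM x y \<le> e"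
  proof cases
    case 1
    then show ?thesis
      using near e by (intro exI[of _ 1]) (auto simp: row_linear_def)
  next
    case 2
    have "x = z" if "x \<in> VV" "dM x z < snd z / 2" for x
    proof -
      have "fst x = fst z" "\<bar>snd x - snd z\<bar> < snd z / 2"
        using near[OF that(1)] that(2) heights_bounds[OF zh] by auto
      moreover from this(2) have "snd x = snd z" by (rule heights_isolated[OF hV(1)[OF that(1)] zh])
      ultimately show ?thesis by (simp add: prod_eq_iff)
    qed
    then show ?thesis using 2 by (intro exI[of _ "snd z / 2"]) auto
  next
    case 3
    define \<delta> where "\<delta> = min 1 (e / (4 * E + 1))"
    have pos: "0 < 4 * E + 1" using assms(1) by simp
    have "\<delta> \<le> e / (4 * E + 1)" unfolding \<delta>_def by simp
    then have \<delta>: "0 < \<delta>" "\<delta> \<le> 1" "(4 * E + 1) * \<delta> \<le> e"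
      using e pos unfolding \<delta>_def by (auto simp: le_divide_eq mult.commute)
    show ?thesis
    proof (intro exI[of _ \<delta>] conjI ballI impI)
      fix x y assume xy: "x \<in> VV" "y \<in> VV" "x \<noteq> y \<and> dM x z < \<delta> \<and> dM y z < \<delta>"
      then have x: "fst x = 1" "snd x < \<delta>" and y: "fst y = 1" "snd y < \<delta>"
        using near[OF xy(1)] near[OF xy(2)] 3 \<delta>(2) by auto
      have "snd x \<noteq> snd y" using xy(3) x y by (metis prod_eqI)
      then have "\<bar>?f x - ?f y\<bar> / dM x y \<le> 4 * E * max (snd x) (snd y)"
        using row_linear_slope_right_column VV_columns xy(1,2) x(1) y(1) assms by blast
      also have "\<dots> \<le> (4 * E + 1) * \<delta>"
        using x y assms(1) hV[OF xy(1)] by (intro mult_mono) auto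
      finally show "\<bar>?f x - ?f y\<bar> / dM x y \<le> e" using \<delta>(3) by linarith
    qed (rule \<delta>(1))
  qed
qed

lemma row_linear_in_YY:
  assumes "0 \<le> E" "\<And>v. v \<in> heights \<Longrightarrow> \<bar>\<phi> v - c\<bar> \<le> E * v^4" "isCont \<phi> 0"
  shows "row_linear \<phi> \<in> YY"
  unfolding YY_def
  using row_linear_Lip0[OF assms(1,2)] row_linear_level_slopes_tendsto[OF assms(3)]
    row_linear_locally_flat[OF assms(1,2)] by blast

section \<open>The plane spanned by F and G\<close>

definition FF :: "pt \<Rightarrow> real" where "FF = row_linear (\<lambda>y. 1 - y^8)"
definition GG :: "pt \<Rightarrow> real" where "GG = row_linear (\<lambda>y. y^4)"

definition FG_comb :: "real \<times> real \<Rightarrow> pt \<Rightarrow> real" where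
  "FG_comb v = fst v *\<^sub>R FF + snd v *\<^sub>R GG"

lemma FG_comb_eq_row_linear: "FG_comb (a, b) = row_linear (\<lambda>y. a * (1 - y^8) + b * y^4)"
  unfolding FG_comb_def FF_def GG_def by (simp add: row_linear_lincomb)

lemma FG_comb_profile_deviation:
  assumes "v \<in> heights"
  shows "\<bar>(a * (1 - v^8) + b * v^4) - a\<bar> \<le> (\<bar>a\<bar> + \<bar>b\<bar>) * v^4"
proof -
  have v: "0 \<le> v" "v \<le> 1" using heights_bounds[OF assms] by auto
  have "v^8 \<le> v^4" using v by (intro power_decreasing) auto
  then have "\<bar>a\<bar> * v^8 \<le> \<bar>a\<bar> * v^4" by (rule mult_left_mono) simp
  moreover have "\<bar>b * v^4 - a * v^8\<bar> \<le> \<bar>b\<bar> * v^4 + \<bar>a\<bar> * v^8"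
    using abs_triangle_ineq4[of "b * v^4" "a * v^8"] v by (simp add: abs_mult)
  ultimately show ?thesis by (simp add: algebra_simps)
qed

lemma FG_comb_in_YY: "FG_comb v \<in> YY"
proof -
  obtain a b where v: "v = (a, b)" by fastforce
  have "isCont (\<lambda>y. a * (1 - y^8) + b * y^4) 0" by (intro continuous_intros)
  then have "row_linear (\<lambda>y. a * (1 - y^8) + b * y^4) \<in> YY"
    by (intro row_linear_in_YY[where E = "\<bar>a\<bar> + \<bar>b\<bar>" and c = a] FG_comb_profile_deviation) auto
  then show ?thesis unfolding v FG_comb_eq_row_linear .
qed

lemma FG_comb_Lip0: "FG_comb v \<in> Lip0"
  using FG_comb_in_YY unfolding YY_def by blast

lemma span_FF_GG: "span {FF, GG} = range FG_comb"
proof -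
  have "x - k *\<^sub>R FF = l *\<^sub>R GG \<longleftrightarrow> x = FG_comb (k, l)" for x k l
    unfolding FG_comb_def by (auto simp: algebra_simps)
  then have "x \<in> span {FF, GG} \<longleftrightarrow> (\<exists>k l. x = FG_comb (k, l))" for x
    unfolding span_insert span_singleton by (auto simp: image_iff)
  then show ?thesis by (auto simp: image_iff)
qed

lemma linear_FG_comb: "linear FG_comb"
  unfolding FG_comb_def by (rule linearI) (simp_all add: algebra_simps scaleR_add_right)

lemma inj_FG_comb: "inj FG_comb"
proof (rule injI)
  fix u v assume eq: "FG_comb u = FG_comb v"
  have "FG_comb u z = FG_comb v z" for z using eq by simp
  from this[of pQ] this[of "(1, 1 / 2 ^ Suc 0)"] show "u = v"
    using points_in_MM(2) points_in_MM(4)[of 0]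
    by (cases u, cases v) (simp add: FG_comb_eq_row_linear row_linear_def pQ_def power_divide)
qed

text \<open>On a single level of height y the slope is 1 + t y^4 - y^8 = 1 + t^2/4 - (y^4 - t/2)^2.\<close>

lemma lipnorm_F_plus_tG_le:
  assumes "0 \<le> t" "t \<le> 1"
  shows "lipnorm MM (FG_comb (1, t)) \<le> 1 + t^2/4"
  unfolding FG_comb_eq_row_linear
proof (rule lipnorm_MM_le)
  fix x y assume xy: "x \<in> MM" "y \<in> MM" "x \<noteq> y"
  let ?\<phi> = "\<lambda>y. 1 * (1 - y^8) + t * y^4"
  show "\<bar>row_linear ?\<phi> x - row_linear ?\<phi> y\<bar> / dM x y \<le> 1 + t^2/4"
  proof (cases "snd x = snd y")
    case True
    define u where "u = snd x"
    have u: "0 \<le> u" "u \<le> 1"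
      using heights_bounds[of u] MM_coordinates[OF xy(1)] unfolding u_def by auto
    have "u^8 \<le> 1" "0 \<le> t * u^4" using u assms by (simp_all add: power_le_one)
    moreover have "t * u^4 - u^8 \<le> t^2/4"
      using zero_le_power2[of "u^4 - t/2"]
      by (simp add: power2_eq_square algebra_simps flip: power_add)
    ultimately have "\<bar>?\<phi> u\<bar> \<le> 1 + t^2/4" by (simp add: algebra_simps)
    then show ?thesis using row_linear_slope_same_level[OF xy True] unfolding u_def by simp
  next
    case False
    have "\<bar>row_linear ?\<phi> x - row_linear ?\<phi> y\<bar> / dM x y \<le> max \<bar>1\<bar> ((\<bar>1\<bar> + \<bar>t\<bar>) / 2)"
      by (rule row_linear_slope_different_levels[OF xy(1,2) False _ FG_comb_profile_deviation]) auto
    moreover have "max \<bar>1::real\<bar> ((\<bar>1\<bar> + \<bar>t\<bar>) / 2) \<le> 1 + t^2/4" using assms by auto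
    ultimately show ?thesis by linarith
  qed
qed

lemma lipnorm_scaled_F_plus_tG_le:
  assumes "0 < t" "t \<le> 1"
  shows "lipnorm MM (FG_comb ((1 / (1 + 1/4 * t^2)) *\<^sub>R (1, t))) \<le> 1"
proof -
  define m where "m = 1 + 1/4 * t^2"
  have m: "0 < m" unfolding m_def by (simp add: add_pos_nonneg)
  have "lipnorm MM (FG_comb ((1 / m) *\<^sub>R (1, t))) \<le> (1 / m) * lipnorm MM (FG_comb (1, t))"
    unfolding linear_cmul[OF linear_FG_comb] using m by (intro lipnorm_MM_scaleR_le FG_comb_Lip0) simp
  also have "\<dots> \<le> (1 / m) * m"
    using lipnorm_F_plus_tG_le[of t] assms m unfolding m_def by (intro mult_left_mono) auto
  finally show ?thesis using m unfolding m_def by simp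
qed

lemma lipnorm_F_plus_sG_gt:
  assumes "0 < s"
  shows "1 < lipnorm MM (FG_comb (1, s))"
proof -
  obtain n where n: "(1/2::real) ^ n < s" using real_arch_pow_inv[of s "1/2"] assms by auto
  define u :: real where "u = 1 / 2 ^ Suc n"
  have "(1::real) \<le> 2 ^ Suc n" by (rule one_le_power) simp
  then have u: "0 < u" "u \<le> 1" unfolding u_def by auto
  have "u^4 \<le> u" using u by (simp add: power_le_one_iff power_decreasing[of 1 4 u, simplified])
  also have "u \<le> (1/2) ^ n" unfolding u_def by (simp add: power_divide field_simps)
  finally have "u^4 < s" using n by simp
  then have "u^4 * u^4 < s * u^4" using u by (intro mult_strict_right_mono) auto
  then have key: "1 < 1 * (1 - u^8) + s * u^4" by (simp add: algebra_simps flip: power_add)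
  let ?x = "(1::real, u)" and ?y = "(0::real, u)"
  have xy: "?x \<in> MM" "?y \<in> MM" "?x \<noteq> ?y" using points_in_MM(3,4)[of n] unfolding u_def by auto
  have "1 < \<bar>FG_comb (1, s) ?x - FG_comb (1, s) ?y\<bar> / dM ?x ?y"
    using key xy by (simp add: FG_comb_eq_row_linear row_linear_def dM_def)
  also have "\<dots> \<le> lipnorm MM (FG_comb (1, s))"
    by (rule slope_le_lipnorm_MM[OF FG_comb_Lip0 xy])
  finally show ?thesis .
qed

section \<open>Polyhedra cannot be tangent to a curve of their own points\<close>

lemma halfplane_contains_vertical_segment:
  fixes a1 a2 c C :: real
  assumes "0 \<le> C" "a1 \<le> c"
    and curve: "\<And>t. 0 < t \<Longrightarrow> t \<le> 1 \<Longrightarrow> a1 + a2 * t \<le> c * (1 + C * t^2)"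
  shows "\<forall>\<^sub>F s in at_right 0. a1 + a2 * s \<le> c"
proof (cases "a1 < c")
  case True
  have "((\<lambda>s. a1 + a2 * s) \<longlongrightarrow> a1) (at_right 0)" by (auto intro!: tendsto_eq_intros)
  from order_tendstoD(2)[OF this True] show ?thesis by (rule eventually_mono) simp
next
  case False
  then have "a1 = c" using assms(2) by simp
  have "\<forall>\<^sub>F t in at_right 0. a2 \<le> c * C * t"
  proof (rule eventually_at_rightI[of 0 1])
    fix t :: real assume "t \<in> {0<..<1}"
    then have t: "0 < t" "t \<le> 1" by auto
    then have "a2 * t \<le> (c * C * t) * t" using curve[of t] \<open>a1 = c\<close>
      by (simp add: power2_eq_square algebra_simps)
    then show "a2 \<le> c * C * t" using t by simp
  qed simp
  moreover have "((\<lambda>t. c * C * t) \<longlongrightarrow> c * C * 0) (at_right 0)" by (intro tendsto_intros)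
  ultimately have "a2 \<le> 0" by (intro tendsto_le[OF _ _ tendsto_const]) auto
  then show ?thesis using \<open>a1 = c\<close> eventually_at_right_less[of 0]
    by (auto elim: eventually_mono simp: mult_nonpos_nonneg)
qed

lemma polyhedron_tangent_curve_imp_segment:
  fixes K :: "(real \<times> real) set" and C :: real
  assumes "polyhedron K" "0 \<le> C" "(1, 0) \<in> K"
    and curve: "\<And>t. 0 < t \<Longrightarrow> t \<le> 1 \<Longrightarrow> (1 / (1 + C * t^2)) *\<^sub>R (1, t) \<in> K"
  shows "\<forall>\<^sub>F s in at_right 0. (1, s) \<in> K"
proof -
  obtain H where H: "finite H" "K = \<Inter>H" "\<And>h. h \<in> H \<Longrightarrow> \<exists>a b. a \<noteq> 0 \<and> h = {x. inner a x \<le> b}"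
    using assms(1) unfolding polyhedron_def by metis
  have "\<forall>\<^sub>F s in at_right 0. (1, s) \<in> h" if hH: "h \<in> H" for h
  proof -
    obtain a b where h: "h = {x. inner a x \<le> b}" using H(3)[OF hH] by blast
    obtain a1 a2 where a: "a = (a1, a2)" by fastforce
    have "K \<subseteq> h" using hH H(2) by blast
    then have "a1 \<le> b" using assms(3) h a by auto
    moreover have "a1 + a2 * t \<le> b * (1 + C * t^2)" if "0 < t" "t \<le> 1" for t
    proof -
      have pos: "0 < 1 + C * t^2" using assms(2) by (simp add: add_pos_nonneg)
      have "(a1 + a2 * t) / (1 + C * t^2) \<le> b"
        using curve[OF that] \<open>K \<subseteq> h\<close> h a by (auto simp: add_divide_distrib)
      then show ?thesis using pos by (simp add: divide_le_eq mult.commute)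
    qed
    ultimately show ?thesis
      using halfplane_contains_vertical_segment[OF assms(2)] h a by simp
  qed
  then show ?thesis using H(1,2) by (simp add: eventually_ball_finite)
qed

lemma polytope_inj_linear_image_imp:
  assumes "linear f" "inj f" "polytope (f ` S)"
  shows "polytope S"
proof -
  obtain P where P: "finite P" "f ` S = convex hull P"
    using assms(3) unfolding polytope_def by blast
  have "P \<subseteq> range f" using P(2) hull_subset[of P convex] by blast
  then have "f ` (f -` P) = P" by blast
  then have "f ` S = f ` (convex hull (f -` P))"
    using P(2) convex_hull_linear_image[OF assms(1)] by metis
  then have "S = convex hull (f -` P)" using assms(2) by (simp add: inj_image_eq_iff)
  moreover have "finite (f -` P)" using P(1) assms(2) by (rule finite_vimageI)
  ultimately show ?thesis unfolding polytope_def by blast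
qed

theorem proposition2p7:
  shows "\<exists>B. finite B \<and> span B \<subseteq> YY \<and>
           \<not> polytope {f \<in> span B. lipnorm MM f \<le> 1}"
proof (intro exI conjI)
  show "finite {FF, GG}" by simp
  show "span {FF, GG} \<subseteq> YY" unfolding span_FF_GG using FG_comb_in_YY by blast
  define K where "K = {v. lipnorm MM (FG_comb v) \<le> 1}"
  have outside: "\<forall>\<^sub>F s in at_right (0::real). (1, s) \<notin> K"
    using eventually_at_right_less[of 0]
    by (rule eventually_mono) (auto simp: K_def dest: lipnorm_F_plus_sG_gt)
  have "\<not> polyhedron K"
  proof
    assume "polyhedron K"
    moreover have "(1, 0) \<in> K" using lipnorm_F_plus_tG_le[of 0] unfolding K_def by simp
    ultimately have "\<forall>\<^sub>F s in at_right 0. (1, s) \<in> K"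
      using polyhedron_tangent_curve_imp_segment[of K "1/4"] lipnorm_scaled_F_plus_tG_le
      unfolding K_def by simp
    from eventually_conj[OF this outside] show False by simp
  qed
  moreover have "{f \<in> span {FF, GG}. lipnorm MM f \<le> 1} = FG_comb ` K"
    unfolding span_FF_GG K_def by auto
  ultimately show "\<not> polytope {f \<in> span {FF, GG}. lipnorm MM f \<le> 1}"
    using polytope_inj_linear_image_imp[OF linear_FG_comb inj_FG_comb] polytope_imp_polyhedron
    by metis
qed

end
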